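(* Let $\Theta=((\lambda_a)_{a\in A_1},(\mu_a)_{a\in A_2},(\gamma_a)_{a\in A_3})$ be a tuple of partitions of multidegree $\bar r=(r_a)_{a\in A}$ (so $|\lambda_a|=r_a$ for $a\in A_1$, $|\mu_a|=r_a$ for $a\in A_2$, $|\gamma_a|=r_a$ for $a\in A_3$). If $\mathrm{Hom}_{H(\mathbf t)}(\Lambda_2(\Theta),\Lambda_1(\Theta))\neq0$, then $r_2=r_3$, where $r_2=\sum_{a\in A_2}r_a=|\mu_{A_2}|$ and $r_3=\sum_{a\in A_3}r_a=|\gamma_{A_3}|$. Moreover: (1) for every $i\in V_{ord}$, $\sum_{a\in A,\,t(a)=i}r_a=\sum_{a\in A,\,i(a)=i}r_a$; (2) for every $q\in\Omega$, $\sum_{a\in A,\,t(a)=i_q}r_a+\sum_{a\in A,\,i(a)=j_q}r_a=\sum_{a\in A,\,i(a)=i_q}r_a+\sum_{a\in A,\,t(a)=j_q}r_a$.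
   Context: $K$ is an algebraically closed field. $Q=(V,A,i,t)$ is a quiver ($i(a),t(a)$ origin and end of $a$) with partition $V=V_{ord}\sqcup\bigsqcup_{q\in\Omega}V_q$, $V_q=\{i_q,j_q\}$, and dimension vector $\mathbf d$ with $d_{i_q}=d_{j_q}=:d_q$. $E_i$ is a $K$-space of dimension $d_i$, identified with $K^{d_q}$ for $i\in V_q$; $W_i=E_i^*$ if $i=j_q$ for some $q$, else $W_i=E_i$. $H(\mathbf t)=\prod_{i\in V_{ord}}GL(E_i)\times\prod_{q\in\Omega}GL(d_q)$, where $GL(d_q)$ acts naturally on both $E_{i_q}=E_{j_q}=K^{d_q}$; it acts diagonally on tensor products. Standing assumption: there is no arrow $a$ with $W_{i(a)}=E_{i(a)}^*$ and $W_{t(a)}=E_{t(a)}^*$, so $A=A_1\sqcup A_2\sqcup A_3$ with $A_1=\{a: W_{i(a)}=E_{i(a)},W_{t(a)}=E_{t(a)}\}$, $A_2=\{a: W_{i(a)}=E_{i(a)},W_{t(a)}=E_{t(a)}^*\}$, $A_3=\{a: W_{i(a)}=E_{i(a)}^*,W_{t(a)}=E_{t(a)}\}$. A partition is a nonincreasing tuple of nonnegative integers; for $\lambda=(\lambda_1,\dots,\lambda_s)$, $\Lambda^\lambda(E)=\Lambda^{\lambda_1}(E)\otimes\cdots\otimes\Lambda^{\lambda_s}(E)$. Define $\Lambda_1(\Theta)=\bigotimes_{a\in A_1}\Lambda^{\lambda_a}(E_{i(a)})\otimes\bigotimes_{a\in A_2}\big(\Lambda^{\mu_a}(E_{t(a)})\otimes\Lambda^{\mu_a}(E_{i(a)})\big)$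 and $\Lambda_2(\Theta)=\bigotimes_{a\in A_1}\Lambda^{\lambda_a}(E_{t(a)})\otimes\bigotimes_{a\in A_3}\big(\Lambda^{\gamma_a}(E_{t(a)})\otimes\Lambda^{\gamma_a}(E_{i(a)})\big)$, as $H(\mathbf t)$-modules. *)

theory Defs
  imports "HOL-Computational_Algebra.Polynomial" "Jordan_Normal_Form.Determinant"
    "Jordan_Normal_Form.DL_Submatrix"
begin

definition is_partition :: "nat list \<Rightarrow> bool" where
  "is_partition lam = sorted_wrt (\<ge>) lam"

text \<open>Quiver with the vertex partition V = V_ord, {i_q, j_q} (q in Omega).
  V: vertices, A: arrows, src = i, tgt = t.\<close>
definition quiver_setup ::
  "'v set \<Rightarrow> 'e set \<Rightarrow> ('e \<Rightarrow> 'v) \<Rightarrow> ('e \<Rightarrow> 'v) \<Rightarrow> 'v set \<Rightarrow> 'q set \<Rightarrow> ('q \<Rightarrow> 'v) \<Rightarrow> ('q \<Rightarrow> 'v)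
   \<Rightarrow> ('v \<Rightarrow> nat) \<Rightarrow> bool" where
  "quiver_setup V A src tgt Vord \<Omega> iq jq d \<longleftrightarrow>
     finite V \<and> finite A \<and> finite \<Omega> \<and>
     (\<forall>a\<in>A. src a \<in> V \<and> tgt a \<in> V) \<and>
     V = Vord \<union> iq ` \<Omega> \<union> jq ` \<Omega> \<and>
     Vord \<inter> iq ` \<Omega> = {} \<and> Vord \<inter> jq ` \<Omega> = {} \<and> iq ` \<Omega> \<inter> jq ` \<Omega> = {} \<and>
     inj_on iq \<Omega> \<and> inj_on jq \<Omega> \<and>
     (\<forall>q\<in>\<Omega>. d (iq q) = d (jq q))"

text \<open>Standing assumption: no arrow with W_{i(a)} = E^* and W_{t(a)} = E^*
  (W_v = E_v^* exactly for v = j_q).\<close>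
definition standing_assumption ::
  "'e set \<Rightarrow> ('e \<Rightarrow> 'v) \<Rightarrow> ('e \<Rightarrow> 'v) \<Rightarrow> 'q set \<Rightarrow> ('q \<Rightarrow> 'v) \<Rightarrow> bool" where
  "standing_assumption A src tgt \<Omega> jq \<longleftrightarrow>
     (\<forall>a\<in>A. \<not> (src a \<in> jq ` \<Omega> \<and> tgt a \<in> jq ` \<Omega>))"

definition arrowsA1 :: "'e set \<Rightarrow> ('e \<Rightarrow> 'v) \<Rightarrow> ('e \<Rightarrow> 'v) \<Rightarrow> 'q set \<Rightarrow> ('q \<Rightarrow> 'v) \<Rightarrow> 'e set" where
  "arrowsA1 A src tgt \<Omega> jq = {a\<in>A. src a \<notin> jq ` \<Omega> \<and> tgt a \<notin> jq ` \<Omega>}"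
definition arrowsA2 :: "'e set \<Rightarrow> ('e \<Rightarrow> 'v) \<Rightarrow> ('e \<Rightarrow> 'v) \<Rightarrow> 'q set \<Rightarrow> ('q \<Rightarrow> 'v) \<Rightarrow> 'e set" where
  "arrowsA2 A src tgt \<Omega> jq = {a\<in>A. src a \<notin> jq ` \<Omega> \<and> tgt a \<in> jq ` \<Omega>}"
definition arrowsA3 :: "'e set \<Rightarrow> ('e \<Rightarrow> 'v) \<Rightarrow> ('e \<Rightarrow> 'v) \<Rightarrow> 'q set \<Rightarrow> ('q \<Rightarrow> 'v) \<Rightarrow> 'e set" where
  "arrowsA3 A src tgt \<Omega> jq = {a\<in>A. src a \<in> jq ` \<Omega> \<and> tgt a \<notin> jq ` \<Omega>}"

text \<open>The group H(t), realised as families g of invertible d_v x d_v matrices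
  (g v acting on E_v = K^{d_v}) subject to g(i_q) = g(j_q): GL(d_q) acting naturally on
  both E_{i_q} and E_{j_q}; g v for v in V_ord arbitrary in GL(E_v).\<close>
definition Hgroup :: "'v set \<Rightarrow> 'q set \<Rightarrow> ('q \<Rightarrow> 'v) \<Rightarrow> ('q \<Rightarrow> 'v) \<Rightarrow> ('v \<Rightarrow> nat)
    \<Rightarrow> ('v \<Rightarrow> 'k::field mat) set" where
  "Hgroup V \<Omega> iq jq d = {g. (\<forall>v\<in>V. g v \<in> carrier_mat (d v) (d v) \<and> det (g v) \<noteq> 0)
        \<and> (\<forall>q\<in>\<Omega>. g (iq q) = g (jq q))}"

text \<open>A tensor product of exterior powers  (x)_{x in F} Lambda^{dg x}(E_{vt x}).
  Standard basis: e_{f} = (x)_x (wedge of e_i, i in f x), f x a dg x-subset of {0..<d(vt x)}.\<close>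
definition ext_basis :: "('v \<Rightarrow> nat) \<Rightarrow> 'x set \<Rightarrow> ('x \<Rightarrow> 'v) \<Rightarrow> ('x \<Rightarrow> nat)
    \<Rightarrow> ('x \<Rightarrow> nat set) set" where
  "ext_basis d F vt dg = {f. (\<forall>x\<in>F. f x \<subseteq> {..<d (vt x)} \<and> card (f x) = dg x)
        \<and> (\<forall>x. x \<notin> F \<longrightarrow> f x = {})}"

text \<open>Matrix coefficient (row f, column f') of the action of g on that tensor product:
  Lambda^k(g) e_J = sum_I det(g[I,J]) e_I, and tensor products act factorwise.\<close>
definition ext_act :: "('v \<Rightarrow> 'k::field mat) \<Rightarrow> 'x set \<Rightarrow> ('x \<Rightarrow> 'v)
    \<Rightarrow> ('x \<Rightarrow> nat set) \<Rightarrow> ('x \<Rightarrow> nat set) \<Rightarrow> 'k" where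
  "ext_act g F vt f f' = (\<Prod>x\<in>F. det (submatrix (g (vt x)) (f x) (f' x)))"

text \<open>Hom_H(M2, M1) \<noteq> 0 for M2 = (F2,vt2,dg2), M1 = (F1,vt1,dg1): there is a nonzero
  matrix Phi (rows: basis of M1, columns: basis of M2) intertwining the actions.\<close>
definition hom_nonzero :: "('v \<Rightarrow> 'k::field mat) set \<Rightarrow> ('v \<Rightarrow> nat)
    \<Rightarrow> 'x set \<Rightarrow> ('x \<Rightarrow> 'v) \<Rightarrow> ('x \<Rightarrow> nat)
    \<Rightarrow> 'y set \<Rightarrow> ('y \<Rightarrow> 'v) \<Rightarrow> ('y \<Rightarrow> nat) \<Rightarrow> bool" where
  "hom_nonzero H d F2 vt2 dg2 F1 vt1 dg1 \<longleftrightarrow>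
     (\<exists>Phi :: ('y \<Rightarrow> nat set) \<Rightarrow> ('x \<Rightarrow> nat set) \<Rightarrow> 'k.
        (\<exists>B\<in>ext_basis d F1 vt1 dg1. \<exists>C\<in>ext_basis d F2 vt2 dg2. Phi B C \<noteq> 0) \<and>
        (\<forall>g\<in>H. \<forall>B\<in>ext_basis d F1 vt1 dg1. \<forall>C\<in>ext_basis d F2 vt2 dg2.
           (\<Sum>B'\<in>ext_basis d F1 vt1 dg1. ext_act g F1 vt1 B B' * Phi B' C)
         = (\<Sum>C'\<in>ext_basis d F2 vt2 dg2. Phi B C' * ext_act g F2 vt2 C' C)))"

text \<open>Factors of Lambda_1(Theta), labelled (a, n, side):
  a in A1: Lambda^{lambda_a!n}(E_{i(a)})  (side True);
  a in A2: Lambda^{mu_a!n}(E_{t(a)}) (side True) and Lambda^{mu_a!n}(E_{i(a)}) (side False).\<close>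
definition Lam1_factors :: "'e set \<Rightarrow> ('e \<Rightarrow> 'v) \<Rightarrow> ('e \<Rightarrow> 'v) \<Rightarrow> 'q set \<Rightarrow> ('q \<Rightarrow> 'v)
    \<Rightarrow> ('e \<Rightarrow> nat list) \<Rightarrow> ('e \<times> nat \<times> bool) set" where
  "Lam1_factors A src tgt \<Omega> jq \<theta> =
     {(a, n, True) | a n. a \<in> arrowsA1 A src tgt \<Omega> jq \<and> n < length (\<theta> a)} \<union>
     {(a, n, s) | a n s. a \<in> arrowsA2 A src tgt \<Omega> jq \<and> n < length (\<theta> a)}"
definition Lam1_vert :: "'e set \<Rightarrow> ('e \<Rightarrow> 'v) \<Rightarrow> ('e \<Rightarrow> 'v) \<Rightarrow> 'q set \<Rightarrow> ('q \<Rightarrow> 'v)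
    \<Rightarrow> ('e \<times> nat \<times> bool) \<Rightarrow> 'v" where
  "Lam1_vert A src tgt \<Omega> jq x = (case x of (a, n, s) \<Rightarrow>
     if a \<in> arrowsA2 A src tgt \<Omega> jq \<and> s then tgt a else src a)"

text \<open>Factors of Lambda_2(Theta):
  a in A1: Lambda^{lambda_a!n}(E_{t(a)}) (side True);
  a in A3: Lambda^{gamma_a!n}(E_{t(a)}) (side True) and Lambda^{gamma_a!n}(E_{i(a)}) (side False).\<close>
definition Lam2_factors :: "'e set \<Rightarrow> ('e \<Rightarrow> 'v) \<Rightarrow> ('e \<Rightarrow> 'v) \<Rightarrow> 'q set \<Rightarrow> ('q \<Rightarrow> 'v)
    \<Rightarrow> ('e \<Rightarrow> nat list) \<Rightarrow> ('e \<times> nat \<times> bool) set" where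
  "Lam2_factors A src tgt \<Omega> jq \<theta> =
     {(a, n, True) | a n. a \<in> arrowsA1 A src tgt \<Omega> jq \<and> n < length (\<theta> a)} \<union>
     {(a, n, s) | a n s. a \<in> arrowsA3 A src tgt \<Omega> jq \<and> n < length (\<theta> a)}"
definition Lam2_vert :: "'e set \<Rightarrow> ('e \<Rightarrow> 'v) \<Rightarrow> ('e \<Rightarrow> 'v) \<Rightarrow> 'q set \<Rightarrow> ('q \<Rightarrow> 'v)
    \<Rightarrow> ('e \<times> nat \<times> bool) \<Rightarrow> 'v" where
  "Lam2_vert A src tgt \<Omega> jq x = (case x of (a, n, s) \<Rightarrow>
     if a \<in> arrowsA3 A src tgt \<Omega> jq \<and> \<not> s then src a else tgt a)"

definition Lam_deg :: "('e \<Rightarrow> nat list) \<Rightarrow> ('e \<times> nat \<times> bool) \<Rightarrow> nat" where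
  "Lam_deg \<theta> x = (case x of (a, n, s) \<Rightarrow> \<theta> a ! n)"

end

theory Submission
  imports Defs
begin

(* A nonzero H(t)-equivariant map must respect the scalar elements of H(t). If a set S of
   vertices contains i_q exactly when it contains j_q, the family acting as t on E_v for v in S
   and as the identity elsewhere lies in H(t). On a tensor product of exterior powers it acts
   diagonally in the standard basis, by t^w, where w is the total degree of the factors sitting
   at vertices of S. An algebraically closed field is infinite, so equivariance forces these
   weights of Lambda_1(Theta) and Lambda_2(Theta) to agree. Taking S = V, S = {v} for v in V_ord
   and S = {i_q, j_q} gives the three claims. Only the sizes r_a of the partitions enter. *)

lemma det_eq_0_if_zero_row:
  fixes A :: "'a::comm_ring_1 mat"
  assumes A: "A \<in> carrier_mat n n" and k: "k < n" and zero: "\<And>j. j < n \<Longrightarrow> A $$ (k, j) = 0"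
  shows "det A = 0"
proof -
  have "A = mat\<^sub>r n n (\<lambda>i. if i = k then 0\<^sub>v n else row A i)"
    using A zero by (intro eq_matI) auto
  also have "det \<dots> = 0"
    using A k by (intro det_row_0) auto
  finally show ?thesis .
qed

lemma det_submatrix_smult_one:
  fixes c :: "'a::comm_ring_1"
  assumes I: "I \<subseteq> {..<n}" and J: "J \<subseteq> {..<n}" and card_eq: "card I = card J"
  shows "det (submatrix (c \<cdot>\<^sub>m 1\<^sub>m n) I J) = (if I = J then c ^ card I else 0)"
proof -
  let ?M = "submatrix (c \<cdot>\<^sub>m 1\<^sub>m n) I J"
  have rows: "{i. i < n \<and> i \<in> I} = I" "{j. j < n \<and> j \<in> J} = J"
    using I J by auto
  have "dim_row ?M = card I" "dim_col ?M = card J"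
    unfolding dim_submatrix index_smult_mat index_one_mat rows by simp_all
  then have M: "?M \<in> carrier_mat (card I) (card I)"
    using card_eq by auto
  have entry: "?M $$ (i, j) = (if pick I i = pick J j then c else 0)"
    if "i < card I" "j < card I" for i j
  proof -
    have "pick I i \<in> I" "pick J j \<in> J"
      using that card_eq by (auto intro: pick_in_set)
    then have "pick I i < n" "pick J j < n"
      using I J by auto
    moreover have "?M $$ (i, j) = (c \<cdot>\<^sub>m 1\<^sub>m n) $$ (pick I i, pick J j)"
      using that card_eq by (intro submatrix_index) (simp_all add: rows)
    ultimately show ?thesis
      by simp
  qed
  show ?thesis
  proof (cases "I = J")
    case True
    have "pick I i = pick J j \<longleftrightarrow> i = j" if "i < card I" "j < card I" for i j
      using that card_pick True by metis
    then have "?M = c \<cdot>\<^sub>m 1\<^sub>m (card I)"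
      using M by (intro eq_matI) (auto simp: entry)
    then show ?thesis
      using True by simp
  next
    case False
    obtain i where i: "i \<in> I" "i \<notin> J"
      using False card_eq card_subset_eq[of J I] finite_subset[OF J] by blast
    define k where "k = card {a\<in>I. a < i}"
    have k: "k < card I"
      unfolding k_def using i(1) finite_subset[OF I] by (intro psubset_card_mono) auto
    have "?M $$ (k, j) = 0" if j: "j < card I" for j
    proof -
      have "pick J j \<in> J"
        using j card_eq by (auto intro: pick_in_set)
      moreover have "pick I k = i"
        unfolding k_def by (rule pick_card_in_set[OF i(1)])
      ultimately show ?thesis
        using entry[OF k j] i(2) by auto
    qed
    then have "det ?M = 0"
      by (rule det_eq_0_if_zero_row[OF M k])
    then show ?thesis
      using False by simp
  qed
qed

lemma infinite_UNIV_alg_closed_field: "infinite (UNIV :: 'a::alg_closed_field set)"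
proof
  assume fin: "finite (UNIV :: 'a set)"
  \<comment> \<open>then \<open>1 + (\<Prod>x. X - x)\<close> has positive degree but no root\<close>
  define q :: "'a poly" where "q = (\<Prod>x\<in>UNIV. [:-x, 1:])"
  have "degree q = card (UNIV :: 'a set)"
    unfolding q_def by (subst degree_prod_sum_eq) auto
  then have "degree (1 + q) > 0"
    using fin by (subst degree_add_eq_right) (auto simp: card_gt_0_iff)
  then obtain y where "poly (1 + q) y = 0"
    using alg_closed_imp_poly_has_root by blast
  moreover have "poly q y = 0"
    unfolding q_def poly_prod using fin by (intro prod_zero) auto
  ultimately show False
    by simp
qed

lemma ex_nonzero_power_neq:
  assumes inf: "infinite (UNIV :: 'a::field set)" and "n \<noteq> m"
  shows "\<exists>t::'a. t \<noteq> 0 \<and> t ^ n \<noteq> t ^ m"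
proof -
  let ?p = "monom (1::'a) n - monom 1 m"
  have "coeff ?p n = 1"
    using \<open>n \<noteq> m\<close> by (simp add: coeff_monom)
  then have "?p \<noteq> 0"
    by (metis coeff_0 zero_neq_one)
  then have "finite {t. poly ?p t = 0}"
    by (rule poly_roots_finite)
  then have "infinite (UNIV - insert 0 {t. poly ?p t = 0})"
    using inf by (intro Diff_infinite_finite) auto
  then obtain t where "t \<notin> insert 0 {t. poly ?p t = 0}"
    using infinite_imp_nonempty by blast
  then show ?thesis
    by (auto simp: poly_monom)
qed

definition scalar_on :: "('v \<Rightarrow> nat) \<Rightarrow> 'v set \<Rightarrow> 'k::field \<Rightarrow> 'v \<Rightarrow> 'k mat" where
  "scalar_on d S t = (\<lambda>w. (if w \<in> S then t else 1) \<cdot>\<^sub>m 1\<^sub>m (d w))"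

definition ext_degree_on :: "'x set \<Rightarrow> ('x \<Rightarrow> 'v) \<Rightarrow> ('x \<Rightarrow> nat) \<Rightarrow> 'v set \<Rightarrow> nat" where
  "ext_degree_on F vt dg S = (\<Sum>x\<in>{x\<in>F. vt x \<in> S}. dg x)"

lemma finite_ext_basis:
  assumes "finite F"
  shows "finite (ext_basis d F vt dg)"
proof -
  let ?B = "\<Union>y\<in>F. Pow {..<d (vt y)}"
  have "ext_basis d F vt dg \<subseteq> {f. \<forall>x. (x \<in> F \<longrightarrow> f x \<in> ?B) \<and> (x \<notin> F \<longrightarrow> f x = {})}"
    unfolding ext_basis_def by blast
  moreover have "finite {f. \<forall>x. (x \<in> F \<longrightarrow> f x \<in> ?B) \<and> (x \<notin> F \<longrightarrow> f x = {})}"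
    using assms by (intro finite_set_of_finite_funs) simp_all
  ultimately show ?thesis
    by (rule finite_subset)
qed

lemma ext_act_scalar_on:
  assumes F: "finite F" and f: "f \<in> ext_basis d F vt dg" and f': "f' \<in> ext_basis d F vt dg"
  shows "ext_act (scalar_on d S t) F vt f f' = (if f = f' then t ^ ext_degree_on F vt dg S else 0)"
proof -
  let ?c = "\<lambda>x. if vt x \<in> S then t else 1"
  have "ext_act (scalar_on d S t) F vt f f' = (\<Prod>x\<in>F. if f x = f' x then ?c x ^ dg x else 0)"
    unfolding ext_act_def scalar_on_def
    using f f' by (intro prod.cong) (auto simp: ext_basis_def det_submatrix_smult_one)
  also have "\<dots> = (if f = f' then t ^ ext_degree_on F vt dg S else 0)"
  proof (cases "f = f'")
    case True
    have "(\<Prod>x\<in>F. ?c x ^ dg x) = (\<Prod>x\<in>F. t ^ (if vt x \<in> S then dg x else 0))"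
      by (intro prod.cong) auto
    also have "\<dots> = t ^ ext_degree_on F vt dg S"
      unfolding ext_degree_on_def power_sum[symmetric] using F by (simp add: sum.inter_filter)
    finally show ?thesis
      using True by simp
  next
    case False
    then obtain x where "x \<in> F" "f x \<noteq> f' x"
      using f f' unfolding ext_basis_def by fastforce
    then have "(\<Prod>x\<in>F. if f x = f' x then ?c x ^ dg x else 0) = 0"
      using F by (intro prod_zero) auto
    then show ?thesis
      using False by simp
  qed
  finally show ?thesis .
qed

lemma hom_nonzero_ext_degree_eq:
  fixes H :: "('v \<Rightarrow> 'k::field mat) set" and F1 :: "'y set" and F2 :: "'x set"
  assumes inf: "infinite (UNIV :: 'k set)" and hom: "hom_nonzero H d F2 vt2 dg2 F1 vt1 dg1"
    and F1: "finite F1" and F2: "finite F2"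
    and scalars: "\<And>t. t \<noteq> 0 \<Longrightarrow> scalar_on d S t \<in> H"
  shows "ext_degree_on F1 vt1 dg1 S = ext_degree_on F2 vt2 dg2 S"
proof (rule ccontr)
  let ?N1 = "ext_degree_on F1 vt1 dg1 S" and ?N2 = "ext_degree_on F2 vt2 dg2 S"
  let ?X1 = "ext_basis d F1 vt1 dg1" and ?X2 = "ext_basis d F2 vt2 dg2"
  assume "?N1 \<noteq> ?N2"
  then obtain t :: 'k where t: "t \<noteq> 0" "t ^ ?N1 \<noteq> t ^ ?N2"
    using ex_nonzero_power_neq[OF inf] by blast
  obtain Phi :: "('y \<Rightarrow> nat set) \<Rightarrow> ('x \<Rightarrow> nat set) \<Rightarrow> 'k" and B C
    where B: "B \<in> ?X1" and C: "C \<in> ?X2" and nz: "Phi B C \<noteq> 0"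
      and intertwines: "\<And>g B C. g \<in> H \<Longrightarrow> B \<in> ?X1 \<Longrightarrow> C \<in> ?X2 \<Longrightarrow>
          (\<Sum>B'\<in>?X1. ext_act g F1 vt1 B B' * Phi B' C) = (\<Sum>C'\<in>?X2. Phi B C' * ext_act g F2 vt2 C' C)"
    using hom unfolding hom_nonzero_def by blast
  let ?g = "scalar_on d S t"
  have "(\<Sum>B'\<in>?X1. ext_act ?g F1 vt1 B B' * Phi B' C) = (\<Sum>B'\<in>?X1. if B = B' then t ^ ?N1 * Phi B' C else 0)"
    by (intro sum.cong) (simp_all add: ext_act_scalar_on[OF F1 B])
  also have "\<dots> = t ^ ?N1 * Phi B C"
    using B finite_ext_basis[OF F1, of d vt1 dg1] by simp
  finally have act1: "(\<Sum>B'\<in>?X1. ext_act ?g F1 vt1 B B' * Phi B' C) = t ^ ?N1 * Phi B C" .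
  have "(\<Sum>C'\<in>?X2. Phi B C' * ext_act ?g F2 vt2 C' C) = (\<Sum>C'\<in>?X2. if C' = C then Phi B C' * t ^ ?N2 else 0)"
    by (intro sum.cong) (simp_all add: ext_act_scalar_on[OF F2 _ C])
  also have "\<dots> = Phi B C * t ^ ?N2"
    using C finite_ext_basis[OF F2, of d vt2 dg2] by simp
  finally have act2: "(\<Sum>C'\<in>?X2. Phi B C' * ext_act ?g F2 vt2 C' C) = Phi B C * t ^ ?N2" .
  have "t ^ ?N1 * Phi B C = Phi B C * t ^ ?N2"
    using intertwines[OF scalars[OF t(1)] B C] unfolding act1 act2 .
  then have "t ^ ?N1 = t ^ ?N2"
    using nz by (metis mult.commute mult_cancel_right)
  then show False
    using t(2) by contradiction
qed

definition factor_layer :: "('e \<Rightarrow> nat list) \<Rightarrow> bool \<Rightarrow> 'e set \<Rightarrow> ('e \<times> nat \<times> bool) set" where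
  "factor_layer \<theta> s X = {(a, n, s) | a n. a \<in> X \<and> n < length (\<theta> a)}"

lemma factor_layer_eq_image:
  "factor_layer \<theta> s X = (\<lambda>(a, n). (a, n, s)) ` Sigma X (\<lambda>a. {..<length (\<theta> a)})"
  unfolding factor_layer_def by auto

lemma finite_factor_layer: "finite X \<Longrightarrow> finite (factor_layer \<theta> s X)"
  by (simp add: factor_layer_eq_image)

lemma sum_Lam_deg_factor_layer:
  assumes "finite X" and "\<forall>a\<in>X. sum_list (\<theta> a) = r a"
  shows "(\<Sum>x\<in>factor_layer \<theta> s X. Lam_deg \<theta> x) = sum r X"
proof -
  have "inj_on (\<lambda>(a, n). (a, n, s)) (Sigma X (\<lambda>a. {..<length (\<theta> a)}))"
    by (auto simp: inj_on_def)
  then have "(\<Sum>x\<in>factor_layer \<theta> s X. Lam_deg \<theta> x) = (\<Sum>a\<in>X. \<Sum>n<length (\<theta> a). \<theta> a ! n)"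
    using assms(1)
    by (simp add: factor_layer_eq_image sum.reindex sum.Sigma Lam_deg_def case_prod_unfold)
  also have "\<dots> = sum r X"
    using assms(2) by (simp add: sum_list_sum_nth atLeast0LessThan)
  finally show ?thesis .
qed

locale paired_quiver =
  fixes V :: "'v set" and A :: "'e set" and src tgt :: "'e \<Rightarrow> 'v"
    and Vord :: "'v set" and \<Omega> :: "'q set" and iq jq :: "'q \<Rightarrow> 'v" and d :: "'v \<Rightarrow> nat"
  assumes quiv: "quiver_setup V A src tgt Vord \<Omega> iq jq d"
    and standing: "standing_assumption A src tgt \<Omega> jq"
begin

abbreviation "A1 \<equiv> arrowsA1 A src tgt \<Omega> jq"
abbreviation "A2 \<equiv> arrowsA2 A src tgt \<Omega> jq"
abbreviation "A3 \<equiv> arrowsA3 A src tgt \<Omega> jq"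

lemma finite_arrows: "finite A"
  using quiv by (simp add: quiver_setup_def)

lemma sum_arrows_split:
  "sum r {a\<in>A. P a} = sum r {a\<in>A1. P a} + sum r {a\<in>A2. P a} + sum r {a\<in>A3. P a}"
proof -
  have "{a\<in>A. P a} = {a\<in>A1. P a} \<union> {a\<in>A2. P a} \<union> {a\<in>A3. P a}"
    using standing unfolding standing_assumption_def arrowsA1_def arrowsA2_def arrowsA3_def by auto
  then show ?thesis
    using finite_arrows
    by (simp add: sum.union_disjoint arrowsA1_def arrowsA2_def arrowsA3_def disjoint_iff)
qed

definition saturated :: "'v set \<Rightarrow> bool" where
  "saturated S \<longleftrightarrow> (\<forall>q\<in>\<Omega>. iq q \<in> S \<longleftrightarrow> jq q \<in> S)"

lemma scalar_on_in_Hgroup: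
  assumes "saturated S" and "t \<noteq> 0"
  shows "scalar_on d S t \<in> Hgroup V \<Omega> iq jq d"
proof -
  have "\<forall>q\<in>\<Omega>. d (iq q) = d (jq q)"
    using quiv by (simp add: quiver_setup_def)
  moreover have "det ((if v \<in> S then t else 1) \<cdot>\<^sub>m 1\<^sub>m (d v)) \<noteq> 0" for v
    using assms(2) by simp
  ultimately show ?thesis
    using assms(1) unfolding Hgroup_def scalar_on_def saturated_def by auto
qed

lemma saturated_vertices: "saturated V"
  using quiv unfolding saturated_def quiver_setup_def by blast

lemma saturated_ord_vertex: "v \<in> Vord \<Longrightarrow> saturated {v}"
  using quiv unfolding saturated_def quiver_setup_def by blast

lemma saturated_pair:
  assumes q: "q \<in> \<Omega>"
  shows "saturated {iq q, jq q}"
  unfolding saturated_def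
proof
  fix q' assume q': "q' \<in> \<Omega>"
  have "iq q' \<noteq> jq q" "jq q' \<noteq> iq q" "iq q' = iq q \<longleftrightarrow> q' = q" "jq q' = jq q \<longleftrightarrow> q' = q"
    using quiv q q' unfolding quiver_setup_def inj_on_def by blast+
  then show "iq q' \<in> {iq q, jq q} \<longleftrightarrow> jq q' \<in> {iq q, jq q}"
    by auto
qed

definition lam1_weight :: "('e \<Rightarrow> nat) \<Rightarrow> 'v set \<Rightarrow> nat" where
  "lam1_weight r S = sum r {a\<in>A1. src a \<in> S} + sum r {a\<in>A2. tgt a \<in> S} + sum r {a\<in>A2. src a \<in> S}"

definition lam2_weight :: "('e \<Rightarrow> nat) \<Rightarrow> 'v set \<Rightarrow> nat" where
  "lam2_weight r S = sum r {a\<in>A1. tgt a \<in> S} + sum r {a\<in>A3. tgt a \<in> S} + sum r {a\<in>A3. src a \<in> S}"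

lemma Lam1_factors_on:
  "{x\<in>Lam1_factors A src tgt \<Omega> jq \<theta>. Lam1_vert A src tgt \<Omega> jq x \<in> S} =
     factor_layer \<theta> True {a\<in>A1. src a \<in> S} \<union> factor_layer \<theta> True {a\<in>A2. tgt a \<in> S}
     \<union> factor_layer \<theta> False {a\<in>A2. src a \<in> S}"
  unfolding Lam1_factors_def Lam1_vert_def factor_layer_def arrowsA1_def arrowsA2_def
  by (auto split: if_splits)

lemma Lam2_factors_on:
  "{x\<in>Lam2_factors A src tgt \<Omega> jq \<theta>. Lam2_vert A src tgt \<Omega> jq x \<in> S} =
     factor_layer \<theta> True {a\<in>A1. tgt a \<in> S} \<union> factor_layer \<theta> True {a\<in>A3. tgt a \<in> S}
     \<union> factor_layer \<theta> False {a\<in>A3. src a \<in> S}"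
  unfolding Lam2_factors_def Lam2_vert_def factor_layer_def arrowsA1_def arrowsA3_def
  by (auto split: if_splits)

lemma finite_Lam_factors:
  "finite (Lam1_factors A src tgt \<Omega> jq \<theta>)" "finite (Lam2_factors A src tgt \<Omega> jq \<theta>)"
  using Lam1_factors_on[of \<theta> UNIV] Lam2_factors_on[of \<theta> UNIV] finite_arrows
  by (simp_all add: finite_factor_layer arrowsA1_def arrowsA2_def arrowsA3_def)

lemma sum_Lam_deg_layers:
  assumes r: "\<forall>a\<in>A. sum_list (\<theta> a) = r a"
    and XYZ: "X \<subseteq> A" "Y \<subseteq> A" "Z \<subseteq> A" and disj: "X \<inter> Y = {}"
  shows "(\<Sum>x\<in>factor_layer \<theta> True X \<union> factor_layer \<theta> True Y \<union> factor_layer \<theta> False Z. Lam_deg \<theta> x)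
    = sum r X + sum r Y + sum r Z"
proof -
  have fin: "finite W" if "W \<subseteq> A" for W
    using that finite_arrows finite_subset by blast
  have layer: "(\<Sum>x\<in>factor_layer \<theta> s W. Lam_deg \<theta> x) = sum r W" if "W \<subseteq> A" for s W
    using that fin r by (intro sum_Lam_deg_factor_layer) auto
  have "factor_layer \<theta> True X \<inter> factor_layer \<theta> True Y = {}"
    "(factor_layer \<theta> True X \<union> factor_layer \<theta> True Y) \<inter> factor_layer \<theta> False Z = {}"
    using disj by (auto simp: factor_layer_def)
  then show ?thesis
    using XYZ by (simp add: sum.union_disjoint finite_factor_layer fin layer)
qed

lemma ext_degree_Lam1:
  assumes "\<forall>a\<in>A. sum_list (\<theta> a) = r a"
  shows "ext_degree_on (Lam1_factors A src tgt \<Omega> jq \<theta>) (Lam1_vert A src tgt \<Omega> jq) (Lam_deg \<theta>) S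
     = lam1_weight r S"
  unfolding ext_degree_on_def Lam1_factors_on lam1_weight_def
  using assms by (rule sum_Lam_deg_layers) (auto simp: arrowsA1_def arrowsA2_def)

lemma ext_degree_Lam2:
  assumes "\<forall>a\<in>A. sum_list (\<theta> a) = r a"
  shows "ext_degree_on (Lam2_factors A src tgt \<Omega> jq \<theta>) (Lam2_vert A src tgt \<Omega> jq) (Lam_deg \<theta>) S
     = lam2_weight r S"
  unfolding ext_degree_on_def Lam2_factors_on lam2_weight_def
  using assms by (rule sum_Lam_deg_layers) (auto simp: arrowsA1_def arrowsA3_def)

lemma lam_weights_eq_if_hom_nonzero:
  assumes r: "\<forall>a\<in>A. sum_list (\<theta> a) = r a"
    and hom: "hom_nonzero (Hgroup V \<Omega> iq jq d :: ('v \<Rightarrow> 'k::alg_closed_field mat) set) d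
               (Lam2_factors A src tgt \<Omega> jq \<theta>) (Lam2_vert A src tgt \<Omega> jq) (Lam_deg \<theta>)
               (Lam1_factors A src tgt \<Omega> jq \<theta>) (Lam1_vert A src tgt \<Omega> jq) (Lam_deg \<theta>)"
    and S: "saturated S"
  shows "lam1_weight r S = lam2_weight r S"
  using hom_nonzero_ext_degree_eq[OF infinite_UNIV_alg_closed_field hom finite_Lam_factors
      scalar_on_in_Hgroup[OF S]]
  by (simp add: ext_degree_Lam1[OF r] ext_degree_Lam2[OF r])

lemma lam_weights_vertices:
  "lam1_weight r V = sum r A1 + 2 * sum r A2" "lam2_weight r V = sum r A1 + 2 * sum r A3"
proof -
  have "{a\<in>X. src a \<in> V} = X" "{a\<in>X. tgt a \<in> V} = X" if "X \<subseteq> A" for X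
    using quiv that unfolding quiver_setup_def by auto
  moreover have "A1 \<subseteq> A" "A2 \<subseteq> A" "A3 \<subseteq> A"
    by (auto simp: arrowsA1_def arrowsA2_def arrowsA3_def)
  ultimately show "lam1_weight r V = sum r A1 + 2 * sum r A2" "lam2_weight r V = sum r A1 + 2 * sum r A3"
    by (simp_all add: lam1_weight_def lam2_weight_def)
qed

lemma lam_weights_ord_vertex:
  assumes "v \<in> Vord"
  shows "lam1_weight r {v} = sum r {a\<in>A. src a = v}" "lam2_weight r {v} = sum r {a\<in>A. tgt a = v}"
proof -
  have "v \<notin> jq ` \<Omega>"
    using quiv assms unfolding quiver_setup_def by blast
  then have "{a\<in>A2. tgt a = v} = {}" "{a\<in>A3. src a = v} = {}"
    by (auto simp: arrowsA2_def arrowsA3_def)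
  note empty = this
  show "lam1_weight r {v} = sum r {a\<in>A. src a = v}" "lam2_weight r {v} = sum r {a\<in>A. tgt a = v}"
    by (simp_all add: lam1_weight_def lam2_weight_def sum_arrows_split empty)
qed

lemma lam_weights_pair:
  assumes "q \<in> \<Omega>"
  shows "lam1_weight r {iq q, jq q} = sum r {a\<in>A. src a = iq q} + sum r {a\<in>A. tgt a = jq q}"
    and "lam2_weight r {iq q, jq q} = sum r {a\<in>A. tgt a = iq q} + sum r {a\<in>A. src a = jq q}"
proof -
  have i: "iq q \<notin> jq ` \<Omega>" and j: "jq q \<in> jq ` \<Omega>"
    using quiv assms unfolding quiver_setup_def by blast+
  have sides: "{a\<in>A1. src a \<in> {iq q, jq q}} = {a\<in>A1. src a = iq q}"
    "{a\<in>A1. tgt a \<in> {iq q, jq q}} = {a\<in>A1. tgt a = iq q}"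
    "{a\<in>A2. src a \<in> {iq q, jq q}} = {a\<in>A2. src a = iq q}"
    "{a\<in>A2. tgt a \<in> {iq q, jq q}} = {a\<in>A2. tgt a = jq q}"
    "{a\<in>A3. src a \<in> {iq q, jq q}} = {a\<in>A3. src a = jq q}"
    "{a\<in>A3. tgt a \<in> {iq q, jq q}} = {a\<in>A3. tgt a = iq q}"
    using i j by (auto simp: arrowsA1_def arrowsA2_def arrowsA3_def)
  have empty: "{a\<in>A1. src a = jq q} = {}" "{a\<in>A2. src a = jq q} = {}"
    "{a\<in>A1. tgt a = jq q} = {}" "{a\<in>A3. tgt a = jq q} = {}"
    "{a\<in>A2. tgt a = iq q} = {}" "{a\<in>A3. src a = iq q} = {}"
    using i j by (auto simp: arrowsA1_def arrowsA2_def arrowsA3_def)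
  show "lam1_weight r {iq q, jq q} = sum r {a\<in>A. src a = iq q} + sum r {a\<in>A. tgt a = jq q}"
    unfolding lam1_weight_def sides sum_arrows_split[of r "\<lambda>a. src a = iq q"]
      sum_arrows_split[of r "\<lambda>a. tgt a = jq q"] empty by simp
  show "lam2_weight r {iq q, jq q} = sum r {a\<in>A. tgt a = iq q} + sum r {a\<in>A. src a = jq q}"
    unfolding lam2_weight_def sides sum_arrows_split[of r "\<lambda>a. tgt a = iq q"]
      sum_arrows_split[of r "\<lambda>a. src a = jq q"] empty by simp
qed

end

theorem lemma2p2:
  fixes V :: "'v set" and A :: "'e set" and src tgt :: "'e \<Rightarrow> 'v"
    and Vord :: "'v set" and \<Omega> :: "'q set" and iq jq :: "'q \<Rightarrow> 'v"
    and d :: "'v \<Rightarrow> nat" and \<theta> :: "'e \<Rightarrow> nat list" and r :: "'e \<Rightarrow> nat"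
  assumes quiv: "quiver_setup V A src tgt Vord \<Omega> iq jq d"
    and standing: "standing_assumption A src tgt \<Omega> jq"
    and parts: "\<forall>a\<in>A. is_partition (\<theta> a)"
    and multideg: "\<forall>a\<in>A. sum_list (\<theta> a) = r a"
    and hom: "hom_nonzero (Hgroup V \<Omega> iq jq d :: ('v \<Rightarrow> 'k::alg_closed_field mat) set) d
               (Lam2_factors A src tgt \<Omega> jq \<theta>) (Lam2_vert A src tgt \<Omega> jq) (Lam_deg \<theta>)
               (Lam1_factors A src tgt \<Omega> jq \<theta>) (Lam1_vert A src tgt \<Omega> jq) (Lam_deg \<theta>)"
  shows "(\<Sum>a\<in>arrowsA2 A src tgt \<Omega> jq. r a) = (\<Sum>a\<in>arrowsA3 A src tgt \<Omega> jq. r a)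
     \<and> (\<forall>v\<in>Vord. (\<Sum>a\<in>{a\<in>A. tgt a = v}. r a) = (\<Sum>a\<in>{a\<in>A. src a = v}. r a))
     \<and> (\<forall>q\<in>\<Omega>. (\<Sum>a\<in>{a\<in>A. tgt a = iq q}. r a) + (\<Sum>a\<in>{a\<in>A. src a = jq q}. r a)
              = (\<Sum>a\<in>{a\<in>A. src a = iq q}. r a) + (\<Sum>a\<in>{a\<in>A. tgt a = jq q}. r a))"
proof -
  interpret paired_quiver V A src tgt Vord \<Omega> iq jq d
    using quiv standing by (rule paired_quiver.intro)
  have balance: "lam1_weight r S = lam2_weight r S" if "saturated S" for S
    using lam_weights_eq_if_hom_nonzero[OF multideg hom that] .
  show ?thesis
    using balance[OF saturated_vertices] balance[OF saturated_ord_vertex] balance[OF saturated_pair]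
    by (simp add: lam_weights_vertices lam_weights_ord_vertex lam_weights_pair)
qed

end
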